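(* Let $n>s\ge1$ be integers, let $t_0,\dots,t_s,t$ be independent indeterminates, $g(x)=\sum_{k=0}^s t_kx^k$ and $f(t;x)=x^n+t\,g(x)$. Let $B=(b_{ij})_{1\le i,j\le s}=M_s(g,g')$ and put $l_k=n-s+k+2$. Then $M_n(f(t;x),f'(t;x))=(\hat a_{ij}(t)+\tilde a_{ij}(t))_{1\le i,j\le n}$, where $$\hat a_{ij}(t)=\begin{cases} n & (i,j)=(1,1),\\ (s-k)t_{s-k}t & (i,j)=(1,l_k-1)\text{ or }(l_k-1,1),\ 0\le k\le s-1,\\ -(l_k-2)t_{s-k}t & i+j=l_k,\ 2\le i,j\le l_k-2,\ 0\le k\le s,\\ 0&\text{otherwise},\end{cases}$$ $$\tilde a_{ij}(t)=\begin{cases} b_{i-(n-s),\,j-(n-s)}\,t^2 & n-s+1\le i,j\le n,\\ 0&\text{otherwise}.\end{cases}$$ Here derivatives are with respect to $x$.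
   Context: Bezoutian: for polynomials $f_1,f_2$ over a field $F$ of characteristic $0$ and an integer $n\ge\max\{\deg f_1,\deg f_2\}$, write $\frac{f_1(x)f_2(y)-f_1(y)f_2(x)}{x-y}=\sum_{i,j=1}^n\alpha_{ij}x^{n-i}y^{n-j}\in F[x,y]$ and set $M_n(f_1,f_2)=(\alpha_{ij})_{1\le i,j\le n}$. Here $F=\mathbb{R}(t_0,\dots,t_s,t)$. *)

theory Defs
  imports "HOL-Computational_Algebra.Polynomial"
begin

text \<open>Bivariate polynomials in x, y are represented as ''a poly poly'':
  the outer variable is x, the coefficients are polynomials in y.\<close>

definition poly_in_x :: "'a::comm_ring_1 poly \<Rightarrow> 'a poly poly" where
  "poly_in_x f = map_poly (\<lambda>c. [:c:]) f"

definition poly_in_y :: "'a::comm_ring_1 poly \<Rightarrow> 'a poly poly" where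
  "poly_in_y f = [:f:]"

definition bezout_poly :: "'a::field poly \<Rightarrow> 'a poly \<Rightarrow> 'a poly poly" where
  "bezout_poly f1 f2 =
     (poly_in_x f1 * poly_in_y f2 - poly_in_y f1 * poly_in_x f2)
       div (poly_in_x [:0, 1:] - poly_in_y [:0, 1:])"

text \<open>Bezoutian M_n(f1,f2) = (alpha_ij), 1 <= i,j <= n, where alpha_ij is the coefficient
  of x^(n-i) y^(n-j).  Entries are meaningful for 1 <= i,j <= n.\<close>
definition bezout_matrix :: "nat \<Rightarrow> 'a::field poly \<Rightarrow> 'a poly \<Rightarrow> nat \<Rightarrow> nat \<Rightarrow> 'a" where
  "bezout_matrix n f1 f2 i j = coeff (coeff (bezout_poly f1 f2) (n - i)) (n - j)"

end

theory Submission
  imports Defs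
begin

(* x - y divides f1(x) f2(y) - f1(y) f2(x) because the difference vanishes at x = y, so the
   Bezoutian is bilinear in (f1, f2). For monomials the quotient (x^a y^b - x^b y^a) / (x - y)
   is a signed sum of monomials along a single antidiagonal. Writing f = x^n + t g, bilinearity
   splits M_n(f, f') into M_n(x^n, (x^n)'), which is n at (1,1) and 0 elsewhere, a part linear
   in t that combines the matrices M_n(x^n, (x^c)') + M_n(x^c, (x^n)') over the monomials x^c
   of g, and t^2 M_n(g, g'), which is M_s(g, g') padded by zeros since deg g, deg g' <= s. *)

lemma poly_in_x_add: "poly_in_x (p + q) = poly_in_x p + poly_in_x q"
  by (rule poly_eqI) (simp add: poly_in_x_def coeff_map_poly)

lemma poly_in_y_add: "poly_in_y (p + q) = poly_in_y p + poly_in_y q"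
  by (simp add: poly_in_y_def)

lemma poly_in_x_smult: "poly_in_x (smult c p) = smult [:c:] (poly_in_x p)"
  by (rule poly_eqI) (simp add: poly_in_x_def coeff_map_poly)

lemma poly_in_y_smult: "poly_in_y (smult c p) = smult [:c:] (poly_in_y p)"
  by (simp add: poly_in_y_def)

lemma x_minus_y_eq: "poly_in_x [:0, 1:] - poly_in_y [:0, 1:] = [:- [:0, 1:], 1 :: 'a::comm_ring_1 poly:]"
  by (simp add: poly_in_x_def poly_in_y_def map_poly_pCons)

lemma x_minus_y_dvd:
  "poly_in_x [:0, 1:] - poly_in_y [:0, 1:] dvd poly_in_x p - poly_in_y (p :: 'a::comm_ring_1 poly)"
proof -
  have "poly (poly_in_x p - poly_in_y p) [:0, 1:] = 0"
    by (simp add: poly_in_x_def poly_in_y_def pcompose_altdef[symmetric])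
  then show ?thesis
    by (simp add: x_minus_y_eq dvd_iff_poly_eq_0)
qed

lemma mult_bezout_poly:
  "(poly_in_x [:0, 1:] - poly_in_y [:0, 1:]) * bezout_poly f1 f2
     = poly_in_x f1 * poly_in_y f2 - poly_in_y f1 * poly_in_x f2"
proof -
  have "poly_in_x f1 * poly_in_y f2 - poly_in_y f1 * poly_in_x f2
      = (poly_in_x f1 - poly_in_y f1) * poly_in_x f2 - poly_in_x f1 * (poly_in_x f2 - poly_in_y f2)"
    by (simp add: algebra_simps)
  then have "poly_in_x [:0, 1:] - poly_in_y [:0, 1:]
      dvd poly_in_x f1 * poly_in_y f2 - poly_in_y f1 * poly_in_x f2"
    by (simp add: x_minus_y_dvd)
  then show ?thesis
    unfolding bezout_poly_def by (rule dvd_mult_div_cancel)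
qed

lemma x_minus_y_nonzero: "poly_in_x [:0, 1:] - poly_in_y [:0, 1:] \<noteq> (0 :: 'a::comm_ring_1 poly poly)"
  by (simp add: x_minus_y_eq)

lemma bezout_poly_eqI:
  assumes "poly_in_x f1 * poly_in_y f2 - poly_in_y f1 * poly_in_x f2
      = (poly_in_x [:0, 1:] - poly_in_y [:0, 1:]) * q"
  shows "bezout_poly f1 f2 = q"
  using mult_bezout_poly[of f1 f2] assms x_minus_y_nonzero mult_left_cancel by metis

lemma bezout_poly_add_left: "bezout_poly (f1 + f2) g = bezout_poly f1 g + bezout_poly f2 g"
  by (rule bezout_poly_eqI)
     (simp only: distrib_left mult_bezout_poly poly_in_x_add poly_in_y_add, simp add: algebra_simps)

lemma bezout_poly_add_right: "bezout_poly f (g1 + g2) = bezout_poly f g1 + bezout_poly f g2"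
  by (rule bezout_poly_eqI)
     (simp only: distrib_left mult_bezout_poly poly_in_x_add poly_in_y_add, simp add: algebra_simps)

lemma bezout_poly_smult_left: "bezout_poly (smult c f) g = smult [:c:] (bezout_poly f g)"
  by (rule bezout_poly_eqI)
     (simp only: mult_smult_right mult_bezout_poly poly_in_x_smult poly_in_y_smult,
      simp add: smult_diff_right)

lemma bezout_poly_smult_right: "bezout_poly f (smult c g) = smult [:c:] (bezout_poly f g)"
  by (rule bezout_poly_eqI)
     (simp only: mult_smult_right mult_bezout_poly poly_in_x_smult poly_in_y_smult,
      simp add: smult_diff_right)

lemma bezout_poly_0_left: "bezout_poly 0 g = 0"
  using bezout_poly_smult_left[of 0 0 g] by simp

lemma bezout_poly_0_right: "bezout_poly f 0 = 0"
  using bezout_poly_smult_right[of f 0 0] by simp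

lemma bezout_poly_sum_left: "bezout_poly (\<Sum>c\<in>A. f c) g = (\<Sum>c\<in>A. bezout_poly (f c) g)"
  by (induction A rule: infinite_finite_induct) (simp_all add: bezout_poly_0_left bezout_poly_add_left)

lemma bezout_poly_sum_right: "bezout_poly f (\<Sum>c\<in>A. g c) = (\<Sum>c\<in>A. bezout_poly f (g c))"
  by (induction A rule: infinite_finite_induct) (simp_all add: bezout_poly_0_right bezout_poly_add_right)

definition xy_monom :: "nat \<Rightarrow> nat \<Rightarrow> 'a::comm_ring_1 poly poly" where
  "xy_monom u v = monom (monom 1 v) u"

lemma coeff_xy_monom: "coeff (coeff (xy_monom u v) P) Q = (if P = u \<and> Q = v then 1 else 0)"
  by (simp add: xy_monom_def)

lemma x_minus_y_mult_xy_monom: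
  "(poly_in_x [:0, 1:] - poly_in_y [:0, 1:]) * xy_monom u v = xy_monom (Suc u) v - xy_monom u (Suc v)"
  by (rule poly_eqI, rule poly_eqI)
     (simp add: x_minus_y_eq xy_monom_def coeff_monom_mult coeff_pCons split: nat.split)

definition xy_antidiagonal :: "nat \<Rightarrow> nat \<Rightarrow> 'a::comm_ring_1 poly poly" where
  "xy_antidiagonal a b = (\<Sum>p<a - b. xy_monom (b + p) (a - Suc p))"

lemma x_minus_y_mult_xy_antidiagonal:
  assumes "b \<le> a"
  shows "(poly_in_x [:0, 1:] - poly_in_y [:0, 1:]) * xy_antidiagonal a b = xy_monom a b - xy_monom b a"
proof -
  define F where "F p = (xy_monom (b + p) (a - p) :: 'a poly poly)" for p
  have "(poly_in_x [:0, 1:] - poly_in_y [:0, 1:]) * xy_antidiagonal a b = (\<Sum>p<a - b. F (Suc p) - F p)"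
    unfolding xy_antidiagonal_def sum_distrib_left
  proof (rule sum.cong)
    fix p assume "p \<in> {..<a - b}"
    then have "Suc (a - Suc p) = a - p" by auto
    then show "(poly_in_x [:0, 1:] - poly_in_y [:0, 1:]) * xy_monom (b + p) (a - Suc p) = F (Suc p) - F p"
      by (simp add: x_minus_y_mult_xy_monom F_def)
  qed simp
  also have "\<dots> = F (a - b) - F 0"
    by (rule sum_lessThan_telescope)
  also have "\<dots> = xy_monom a b - xy_monom b a"
    using assms by (simp add: F_def)
  finally show ?thesis .
qed

lemma coeff_xy_antidiagonal:
  "coeff (coeff (xy_antidiagonal a b :: 'a::comm_ring_1 poly poly) P) Q
     = (if b \<le> P \<and> b \<le> Q \<and> P + Q + 1 = a + b then 1 else 0)"
proof -
  have "coeff (coeff (xy_antidiagonal a b :: 'a poly poly) P) Q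
      = (\<Sum>p<a - b. if p = P - b then if b \<le> P \<and> Q = a - Suc p then 1 else 0 else 0)"
    unfolding xy_antidiagonal_def coeff_sum by (intro sum.cong) (auto simp: coeff_xy_monom)
  also have "\<dots> = (if P - b < a - b \<and> b \<le> P \<and> Q = a - Suc (P - b) then 1 else 0)"
    by simp
  also have "\<dots> = (if b \<le> P \<and> b \<le> Q \<and> P + Q + 1 = a + b then 1 else 0)"
    by (intro if_cong) auto
  finally show ?thesis .
qed

lemma bezout_poly_monom:
  "bezout_poly (monom 1 a) (monom 1 b) = xy_antidiagonal a b - xy_antidiagonal b a"
proof (rule bezout_poly_eqI)
  have xy: "poly_in_x (monom 1 u) * poly_in_y (monom 1 v) = xy_monom u v" for u v
    by (rule poly_eqI, rule poly_eqI) (simp add: poly_in_x_def poly_in_y_def xy_monom_def coeff_map_poly)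
  have vanish: "xy_antidiagonal u v = 0" if "u \<le> v" for u v
    using that by (simp add: xy_antidiagonal_def)
  show "poly_in_x (monom 1 a) * poly_in_y (monom 1 b) - poly_in_y (monom 1 a) * poly_in_x (monom 1 b)
      = (poly_in_x [:0, 1:] - poly_in_y [:0, 1:]) * (xy_antidiagonal a b - xy_antidiagonal b a)"
    by (cases "b \<le> a")
       (simp_all add: mult.commute[of "poly_in_y _"] xy vanish right_diff_distrib x_minus_y_mult_xy_antidiagonal)
qed

lemma coeff_bezout_poly_monom:
  "coeff (coeff (bezout_poly (monom 1 a) (monom 1 b)) P) Q
     = (if P + Q + 1 = a + b \<and> min a b \<le> P \<and> min a b \<le> Q then if b < a then 1 else -1 else (0::'a::field))"
  by (auto simp: bezout_poly_monom coeff_xy_antidiagonal)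

lemma coeff_bezout_poly:
  assumes "degree f \<le> N" "degree g \<le> N"
  shows "coeff (coeff (bezout_poly f g) P) Q
    = (\<Sum>a\<le>N. \<Sum>b\<le>N. coeff f a * coeff g b * coeff (coeff (bezout_poly (monom 1 a) (monom 1 b)) P) Q)"
proof -
  have "p = (\<Sum>a\<le>N. smult (coeff p a) (monom 1 a))" if "degree p \<le> N" for p :: "'a poly"
    using poly_as_sum_of_monoms'[OF that] by (simp add: smult_monom)
  then have "bezout_poly f g = bezout_poly (\<Sum>a\<le>N. smult (coeff f a) (monom 1 a))
      (\<Sum>b\<le>N. smult (coeff g b) (monom 1 b))"
    using assms by simp
  also have "\<dots> = (\<Sum>a\<le>N. smult [:coeff f a:]
      (\<Sum>b\<le>N. smult [:coeff g b:] (bezout_poly (monom 1 a) (monom 1 b))))"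
    by (simp only: bezout_poly_sum_left bezout_poly_smult_left)
       (simp only: bezout_poly_sum_right bezout_poly_smult_right)
  finally show ?thesis
    by (simp add: coeff_sum sum_distrib_left mult_ac)
qed

lemma coeff_bezout_poly_eq_0:
  assumes "degree f \<le> N" "degree g \<le> N" "N \<le> P \<or> N \<le> Q"
  shows "coeff (coeff (bezout_poly f g) P) Q = 0"
  using assms(3) unfolding coeff_bezout_poly[OF assms(1,2)]
  by (auto simp: coeff_bezout_poly_monom intro!: sum.neutral)

lemma bezout_matrix_shift:
  assumes "degree f \<le> s" "degree g \<le> s" "s \<le> n" "i \<le> n" "j \<le> n"
  shows "bezout_matrix n f g i j = (if n - s + 1 \<le> i \<and> n - s + 1 \<le> j
    then bezout_matrix s f g (i - (n - s)) (j - (n - s)) else 0)"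
proof (cases "n - s + 1 \<le> i \<and> n - s + 1 \<le> j")
  case True
  then have "s - (i - (n - s)) = n - i" "s - (j - (n - s)) = n - j"
    using assms(3) by auto
  with True show ?thesis
    by (simp add: bezout_matrix_def)
next
  case False
  then have "s \<le> n - i \<or> s \<le> n - j"
    using assms(3-5) by auto
  then show ?thesis
    unfolding if_not_P[OF False] bezout_matrix_def by (rule coeff_bezout_poly_eq_0[OF assms(1,2)])
qed

lemma bezout_poly_add_smult_pderiv:
  "bezout_poly (p + smult t g) (pderiv (p + smult t g))
     = bezout_poly p (pderiv p) + smult [:t:] (bezout_poly p (pderiv g) + bezout_poly g (pderiv p))
       + smult [:t ^ 2:] (bezout_poly g (pderiv g))"
  by (simp add: pderiv_add pderiv_smult bezout_poly_add_left bezout_poly_add_right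
      bezout_poly_smult_left bezout_poly_smult_right smult_add_right power2_eq_square)

lemma pderiv_sum: "pderiv (\<Sum>x\<in>A. f x) = (\<Sum>x\<in>A. pderiv (f x))"
  using higher_pderiv_sum[of 1 f A] by simp

lemma pderiv_monom_1: "pderiv (monom 1 n) = smult (of_nat n) (monom 1 (n - 1))"
  by (simp add: pderiv_monom smult_monom)

lemma bezout_poly_pderiv_sum_monom:
  "bezout_poly p (pderiv (\<Sum>c\<in>A. monom (a c) c)) + bezout_poly (\<Sum>c\<in>A. monom (a c) c) (pderiv p)
     = (\<Sum>c\<in>A. smult [:a c:] (bezout_poly p (pderiv (monom 1 c)) + bezout_poly (monom 1 c) (pderiv p)))"
proof -
  have "(\<Sum>c\<in>A. monom (a c) c) = (\<Sum>c\<in>A. smult (a c) (monom 1 c))"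
    by (simp add: smult_monom)
  then show ?thesis
    by (simp add: pderiv_sum pderiv_smult bezout_poly_sum_left bezout_poly_sum_right
        bezout_poly_smult_left bezout_poly_smult_right smult_add_right sum.distrib)
qed

lemma bezout_matrix_monom:
  assumes "i \<le> n" "j \<le> n"
  shows "bezout_matrix n (monom 1 a) (monom 1 b) i j
    = (if i + j + a + b = 2 * n + 1 \<and> i + min a b \<le> n \<and> j + min a b \<le> n
       then if b < a then 1 else -1 else (0::'a::field))"
proof -
  have "n - i + (n - j) + 1 = a + b \<and> min a b \<le> n - i \<and> min a b \<le> n - j
      \<longleftrightarrow> i + j + a + b = 2 * n + 1 \<and> i + min a b \<le> n \<and> j + min a b \<le> n"
    using assms by linarith
  then show ?thesis
    by (simp add: bezout_matrix_def coeff_bezout_poly_monom)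
qed

lemma bezout_matrix_monom_pderiv_monom:
  assumes "1 \<le> i" "i \<le> n" "1 \<le> j" "j \<le> n"
  shows "bezout_matrix n (monom 1 n) (pderiv (monom 1 n)) i j = (if i = 1 \<and> j = 1 then of_nat n else 0)"
  using assms by (auto simp: bezout_matrix_def pderiv_monom_1 bezout_poly_smult_right coeff_bezout_poly_monom)

lemma bezout_matrix_monom_pderiv_cross:
  assumes "c < n" "1 \<le> i" "i \<le> n" "1 \<le> j" "j \<le> n"
  shows "bezout_matrix n (monom 1 n) (pderiv (monom 1 c)) i j
      + bezout_matrix n (monom 1 c) (pderiv (monom 1 n)) i j
    = (if 0 < c \<and> (i = 1 \<and> j = n + 1 - c \<or> i = n + 1 - c \<and> j = 1) then of_nat c else 0)
      + (if i + j = n + 2 - c \<and> 2 \<le> i \<and> i \<le> n - c \<and> 2 \<le> j \<and> j \<le> n - c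
         then - of_nat (n - c) else (0::'a::field_char_0))" (is "_ = ?rhs")
proof -
  have x_n: "of_nat c * bezout_matrix n (monom 1 n) (monom 1 (c - 1)) i j
      = (if 0 < c \<and> i + j = n + 2 - c \<and> i \<le> n + 1 - c \<and> j \<le> n + 1 - c then of_nat c else (0::'a))"
    using assms by (cases "c = 0") (auto simp: bezout_matrix_monom)
  have x_c: "bezout_matrix n (monom 1 c) (monom 1 (n - 1)) i j
      = (if c + 1 < n \<and> i + j = n + 2 - c \<and> i \<le> n - c \<and> j \<le> n - c then -1 else (0::'a))"
    using assms by (auto simp: bezout_matrix_monom)
  have "bezout_matrix n (monom 1 n) (pderiv (monom 1 c)) i j
      + bezout_matrix n (monom 1 c) (pderiv (monom 1 n)) i j
      = of_nat c * bezout_matrix n (monom 1 n) (monom 1 (c - 1)) i j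
        + of_nat n * (bezout_matrix n (monom 1 c) (monom 1 (n - 1)) i j :: 'a)"
    by (simp add: bezout_matrix_def pderiv_monom_1 bezout_poly_smult_right)
  also have "\<dots> = (if 0 < c \<and> i + j = n + 2 - c \<and> i \<le> n + 1 - c \<and> j \<le> n + 1 - c then of_nat c else 0)
      + of_nat n * (if c + 1 < n \<and> i + j = n + 2 - c \<and> i \<le> n - c \<and> j \<le> n - c then -1 else 0)"
    by (simp only: x_n x_c)
  also have "\<dots> = ?rhs"
  proof (cases "i + j = n + 2 - c")
    case antidiagonal: True
    consider "i = 1" | "j = 1" | "2 \<le> i" "2 \<le> j"
      using assms by linarith
    then show ?thesis
    proof cases
      case 1
      then have "j = n + 1 - c" "\<not> j \<le> n - c"
        using antidiagonal assms by auto
      then show ?thesis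
        using 1 antidiagonal by simp
    next
      case 2
      then have "i = n + 1 - c" "\<not> i \<le> n - c"
        using antidiagonal assms by auto
      then show ?thesis
        using 2 antidiagonal by simp
    next
      case 3
      then have "i \<le> n - c" "j \<le> n - c" "i \<le> n + 1 - c" "j \<le> n + 1 - c" "c + 1 < n"
        using antidiagonal assms by auto
      then show ?thesis
        using 3 antidiagonal assms by (cases "c = 0") (simp_all add: of_nat_diff)
    qed
  qed (use assms in auto)
  finally show ?thesis .
qed

lemma bezout_matrix_pderiv_linear_part:
  fixes ts :: "nat \<Rightarrow> 'a::field_char_0"
  assumes "s < n" "1 \<le> i" "i \<le> n" "1 \<le> j" "j \<le> n"
  shows "t * (\<Sum>c\<le>s. ts c * (bezout_matrix n (monom 1 n) (pderiv (monom 1 c)) i j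
            + bezout_matrix n (monom 1 c) (pderiv (monom 1 n)) i j))
    = (\<Sum>k<s. if i = 1 \<and> j = n - s + k + 1 \<or> i = n - s + k + 1 \<and> j = 1
          then of_nat (s - k) * ts (s - k) * t else 0)
      + (\<Sum>k\<le>s. if i + j = n - s + k + 2 \<and> 2 \<le> i \<and> i \<le> n - s + k \<and> 2 \<le> j \<and> j \<le> n - s + k
          then - (of_nat (n - s + k) * ts (s - k) * t) else 0)"
    (is "t * (\<Sum>c\<le>s. ts c * ?pair c) = _")
proof -
  define corner where "corner k = (if k < s \<and> (i = 1 \<and> j = n - s + k + 1 \<or> i = n - s + k + 1 \<and> j = 1)
      then of_nat (s - k) * ts (s - k) * t else 0)" for k
  define antidiagonal where "antidiagonal k = (if i + j = n - s + k + 2 \<and> 2 \<le> i \<and> i \<le> n - s + k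
      \<and> 2 \<le> j \<and> j \<le> n - s + k then - (of_nat (n - s + k) * ts (s - k) * t) else 0)" for k
  \<comment> \<open>the paper indexes by \<open>k = s - c\<close>, so that \<open>l\<^sub>k = n + 2 - c\<close>\<close>
  have "t * (\<Sum>c\<le>s. ts c * ?pair c) = (\<Sum>k\<le>s. t * (ts (s - k) * ?pair (s - k)))"
    using sum.atLeastAtMost_rev[of "\<lambda>c. t * (ts c * ?pair c)" 0 s]
    by (simp only: sum_distrib_left atLeast0AtMost diff_zero add_0_right)
  also have "\<dots> = (\<Sum>k\<le>s. corner k + antidiagonal k)"
  proof (rule sum.cong)
    fix k assume "k \<in> {..s}"
    then have shift: "n + 1 - (s - k) = n - s + k + 1" "n + 2 - (s - k) = n - s + k + 2"
      "n - (s - k) = n - s + k" "0 < s - k \<longleftrightarrow> k < s"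
      using assms(1) by auto
    moreover have "s - k < n"
      using assms(1) by auto
    show "t * (ts (s - k) * ?pair (s - k)) = corner k + antidiagonal k"
      unfolding bezout_matrix_monom_pderiv_cross[OF \<open>s - k < n\<close> assms(2-5)] shift corner_def antidiagonal_def
      by (auto simp: algebra_simps)
  qed simp
  also have "\<dots> = (\<Sum>k<s. corner k) + (\<Sum>k\<le>s. antidiagonal k)"
    by (simp add: sum.distrib lessThan_Suc_atMost[symmetric] corner_def)
  finally show ?thesis
    by (simp add: corner_def antidiagonal_def)
qed

theorem proposition5p4:
  fixes n s :: nat and ts :: "nat \<Rightarrow> 'a::field_char_0" and t :: 'a
    and g f :: "'a poly" and B :: "nat \<Rightarrow> nat \<Rightarrow> 'a" and l :: "nat \<Rightarrow> nat"
    and ahat atilde :: "nat \<Rightarrow> nat \<Rightarrow> 'a"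
  assumes "1 \<le> s" and "s < n"
    and g_def: "g = (\<Sum>k\<le>s. monom (ts k) k)"
    and f_def: "f = monom 1 n + smult t g"
    and B_def: "B = bezout_matrix s g (pderiv g)"
    and l_def: "\<And>k. l k = n - s + k + 2"
    and ahat_def: "\<And>i j. ahat i j =
        (if i = 1 \<and> j = 1 then of_nat n else 0)
      + (\<Sum>k<s. if (i = 1 \<and> j = l k - 1) \<or> (i = l k - 1 \<and> j = 1)
                 then of_nat (s - k) * ts (s - k) * t else 0)
      + (\<Sum>k\<le>s. if i + j = l k \<and> 2 \<le> i \<and> i \<le> l k - 2 \<and> 2 \<le> j \<and> j \<le> l k - 2
                 then - (of_nat (l k - 2) * ts (s - k) * t) else 0)"
    and atilde_def: "\<And>i j. atilde i j =
        (if n - s + 1 \<le> i \<and> i \<le> n \<and> n - s + 1 \<le> j \<and> j \<le> n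
         then B (i - (n - s)) (j - (n - s)) * t ^ 2 else 0)"
  shows "\<forall>i\<in>{1..n}. \<forall>j\<in>{1..n}. bezout_matrix n f (pderiv f) i j = ahat i j + atilde i j"
proof (intro ballI)
  fix i j assume "i \<in> {1..n}" "j \<in> {1..n}"
  then have ij: "1 \<le> i" "i \<le> n" "1 \<le> j" "j \<le> n"
    by auto
  have deg_g: "degree g \<le> s"
    unfolding g_def by (intro degree_sum_le order.trans[OF degree_monom_le]) auto
  moreover have "degree (pderiv g) \<le> s"
    using deg_g degree_pderiv[of g] by linarith
  ultimately have deg: "degree g \<le> s" "degree (pderiv g) \<le> s" .
  have "bezout_matrix n f (pderiv f) i j
      = bezout_matrix n (monom 1 n) (pderiv (monom 1 n)) i j
        + t * (bezout_matrix n (monom 1 n) (pderiv g) i j + bezout_matrix n g (pderiv (monom 1 n)) i j)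
        + t ^ 2 * bezout_matrix n g (pderiv g) i j"
    unfolding f_def bezout_matrix_def bezout_poly_add_smult_pderiv by simp
  also have "bezout_matrix n (monom 1 n) (pderiv g) i j + bezout_matrix n g (pderiv (monom 1 n)) i j
      = (\<Sum>c\<le>s. ts c * (bezout_matrix n (monom 1 n) (pderiv (monom 1 c)) i j
            + bezout_matrix n (monom 1 c) (pderiv (monom 1 n)) i j))"
    unfolding bezout_matrix_def coeff_add[symmetric] g_def bezout_poly_pderiv_sum_monom
    by (simp add: coeff_sum)
  also have "t * (\<Sum>c\<le>s. ts c * (bezout_matrix n (monom 1 n) (pderiv (monom 1 c)) i j
            + bezout_matrix n (monom 1 c) (pderiv (monom 1 n)) i j))
      = ahat i j - (if i = 1 \<and> j = 1 then of_nat n else 0)"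
    unfolding ahat_def l_def add_diff_cancel_right' bezout_matrix_pderiv_linear_part[OF assms(2) ij] by simp
  also have "t ^ 2 * bezout_matrix n g (pderiv g) i j = atilde i j"
    unfolding atilde_def B_def bezout_matrix_shift[OF deg less_imp_le[OF assms(2)] ij(2,4)]
    using ij by (simp add: mult.commute)
  finally show "bezout_matrix n f (pderiv f) i j = ahat i j + atilde i j"
    by (simp add: bezout_matrix_monom_pderiv_monom[OF ij])
qed

end
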